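(* Let $G$ be a cubic graph, let $M$ be a perfect matching cut of $G$, and let $C$ be an induced $4$-vertex cycle of $G$. Then exactly one of the following holds: (a) $E(C) \cap M = \emptyset$ and all four outgoing edges of $V(C)$ belong to $M$; (b) $|E(C) \cap M| = 2$, the two edges of $E(C) \cap M$ are vertex-disjoint, and no outgoing edge of $V(C)$ belongs to $M$.
   Context: All graphs are finite, simple and undirected; a graph is cubic if every vertex has exactly three neighbours. A cutset of $G$ is a set $M \subseteq E(G)$ for which there is a bipartition $X \uplus Y = V(G)$ into two nonempty sets such that $M$ is exactly the set of edges with one endpoint in $X$ and one in $Y$. A perfect matching cut is a perfect matching (a set of edges covering every vertex exactly once) that is also a cutset. For $U \subseteq V(G)$, the outgoing edges of $U$ are the edges of $G$ with exactly one endpoint in $U$. For a subgraph $C$, $E(C)$ and $V(C)$ denote its edge set and vertex set. *)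

theory Defs
  imports Main
begin

definition simple_graph :: "'a set \<Rightarrow> 'a set set \<Rightarrow> bool" where
  "simple_graph V E \<longleftrightarrow> finite V \<and> (\<forall>e\<in>E. e \<subseteq> V \<and> card e = 2)"

definition neighbours :: "'a set set \<Rightarrow> 'a \<Rightarrow> 'a set" where
  "neighbours E v = {u. {u, v} \<in> E}"

definition cubic :: "'a set \<Rightarrow> 'a set set \<Rightarrow> bool" where
  "cubic V E \<longleftrightarrow> simple_graph V E \<and> (\<forall>v\<in>V. card (neighbours E v) = 3)"

definition outgoing :: "'a set set \<Rightarrow> 'a set \<Rightarrow> 'a set set" where
  "outgoing E U = {e\<in>E. card (e \<inter> U) = 1}"

definition perfect_matching :: "'a set \<Rightarrow> 'a set set \<Rightarrow> 'a set set \<Rightarrow> bool" where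
  "perfect_matching V E M \<longleftrightarrow> M \<subseteq> E \<and> (\<forall>v\<in>V. \<exists>!e. e \<in> M \<and> v \<in> e)"

definition cutset :: "'a set \<Rightarrow> 'a set set \<Rightarrow> 'a set set \<Rightarrow> bool" where
  "cutset V E M \<longleftrightarrow> (\<exists>X Y. X \<union> Y = V \<and> X \<inter> Y = {} \<and> X \<noteq> {} \<and> Y \<noteq> {}
       \<and> M = {e\<in>E. e \<inter> X \<noteq> {} \<and> e \<inter> Y \<noteq> {}})"

definition perfect_matching_cut :: "'a set \<Rightarrow> 'a set set \<Rightarrow> 'a set set \<Rightarrow> bool" where
  "perfect_matching_cut V E M \<longleftrightarrow> perfect_matching V E M \<and> cutset V E M"

definition induced_C4 :: "'a set \<Rightarrow> 'a set set \<Rightarrow> 'a \<Rightarrow> 'a \<Rightarrow> 'a \<Rightarrow> 'a \<Rightarrow> bool" where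
  "induced_C4 V E a b c d \<longleftrightarrow> {a,b,c,d} \<subseteq> V \<and> card {a,b,c,d} = 4 \<and>
     {a,b} \<in> E \<and> {b,c} \<in> E \<and> {c,d} \<in> E \<and> {d,a} \<in> E \<and>
     {a,c} \<notin> E \<and> {b,d} \<notin> E"

definition C4_edges :: "'a \<Rightarrow> 'a \<Rightarrow> 'a \<Rightarrow> 'a \<Rightarrow> 'a set set" where
  "C4_edges a b c d = {{a,b},{b,c},{c,d},{d,a}}"

end

theory Submission
  imports Defs
begin

(* Two consecutive edges of C cannot both lie in M, so either C lies on
   one side of the cut, or the cut separates C into two pairs of adjacent vertices.  In the first
   case no edge of C is in M, so every vertex of C is matched along its third edge, which leaves
   C because C is induced.  In the second case two opposite edges of C lie in M; they cover C,
   so no outgoing edge can be matched. *)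

lemma perfect_matching_edge_unique:
  assumes "perfect_matching V E M" "v \<in> V" "e \<in> M" "f \<in> M" "v \<in> e" "v \<in> f"
  shows "e = f"
  using assms unfolding perfect_matching_def by blast

lemma card_2_member:
  assumes "card e = 2" "v \<in> e"
  obtains u where "e = {v,u}" "u \<noteq> v"
  using assms by (metis card_2_iff insertE insert_commute singletonD)

lemma perfect_matching_adjacent_edges:
  assumes "perfect_matching V E M" "v \<in> V" "{u,v} \<in> M" "{v,w} \<in> M"
  shows "u = w"
proof -
  have "{u,v} = {v,w}"
    using perfect_matching_edge_unique[OF assms] by simp
  then show ?thesis
    by (auto simp: doubleton_eq_iff)
qed

lemma cubic_matched_third_edge:
  assumes "cubic V E" "perfect_matching V E M" "v \<in> V" "n1 \<noteq> n2"
    and "{v,n1} \<in> E" "{v,n2} \<in> E" "{v,n1} \<notin> M" "{v,n2} \<notin> M"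
    and "e \<in> E" "v \<in> e" "n1 \<notin> e" "n2 \<notin> e"
  shows "e \<in> M"
proof (rule ccontr)
  assume "e \<notin> M"
  have simple: "simple_graph V E" and deg: "card (neighbours E v) = 3"
    using assms(1,3) unfolding cubic_def by auto
  obtain f where f: "f \<in> M" "v \<in> f" "f \<in> E"
    using assms(2,3) unfolding perfect_matching_def by blast
  have "card f = 2" "card e = 2"
    using simple f(3) assms(9) unfolding simple_graph_def by auto
  then obtain w u where w: "f = {v,w}" and u: "e = {v,u}"
    using f(2) assms(10) by (metis card_2_member)
  have "u \<noteq> w" "w \<noteq> n1" "w \<noteq> n2"
    using \<open>e \<notin> M\<close> assms(7,8) f(1) u w by auto
  moreover have "u \<noteq> n1" "u \<noteq> n2"
    using assms(11,12) u by auto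
  ultimately have "card {n1,n2,w,u} = 4"
    using assms(4) by auto
  moreover have "card {n1,n2,w,u} \<le> card (neighbours E v)"
  proof (rule card_mono)
    show "finite (neighbours E v)"
      using deg card.infinite by fastforce
    show "{n1,n2,w,u} \<subseteq> neighbours E v"
      using assms(5,6,9) f(3) u w by (auto simp: neighbours_def insert_commute)
  qed
  ultimately show False
    using deg by simp
qed

lemma cut_edge_iff:
  assumes "X \<union> Y = V" "X \<inter> Y = {}" "M = {e\<in>E. e \<inter> X \<noteq> {} \<and> e \<inter> Y \<noteq> {}}"
    and "{u,v} \<in> E" "u \<in> V" "v \<in> V"
  shows "{u,v} \<in> M \<longleftrightarrow> (u \<in> X) \<noteq> (v \<in> X)"
  using assms by auto

lemma induced_C4_distinct:
  assumes "induced_C4 V E a b c d"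
  shows "distinct [a,b,c,d]"
  using assms unfolding induced_C4_def by (intro card_distinct) simp

lemma induced_C4_vertices:
  assumes "induced_C4 V E a b c d"
  shows "{a,b,c,d} \<subseteq> V"
  using assms unfolding induced_C4_def by blast

lemma induced_C4_rotate:
  assumes "induced_C4 V E a b c d"
  shows "induced_C4 V E b c d a"
  using assms unfolding induced_C4_def by (auto simp: insert_commute)

lemma C4_edges_rotate: "C4_edges b c d a = C4_edges a b c d"
  unfolding C4_edges_def by (simp add: insert_commute)

lemma C4_edges_subset:
  assumes "induced_C4 V E a b c d"
  shows "C4_edges a b c d \<subseteq> E"
  using assms unfolding induced_C4_def C4_edges_def by auto

lemma C4_two_neighbours:
  assumes "induced_C4 V E a b c d" "v \<in> {a,b,c,d}"
  obtains n1 n2 where "n1 \<noteq> n2" "n1 \<noteq> v" "n2 \<noteq> v" "n1 \<in> {a,b,c,d}" "n2 \<in> {a,b,c,d}"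
    "{v,n1} \<in> C4_edges a b c d" "{v,n2} \<in> C4_edges a b c d"
proof -
  have distinct: "distinct [a,b,c,d]"
    using assms(1) by (rule induced_C4_distinct)
  from assms(2) consider "v = a" | "v = b" | "v = c" | "v = d"
    by blast
  then show thesis
  proof cases
    case 1
    with distinct show thesis
      by (intro that[of b d]) (auto simp: C4_edges_def insert_commute)
  next
    case 2
    with distinct show thesis
      by (intro that[of a c]) (auto simp: C4_edges_def insert_commute)
  next
    case 3
    with distinct show thesis
      by (intro that[of b d]) (auto simp: C4_edges_def insert_commute)
  next
    case 4
    with distinct show thesis
      by (intro that[of a c]) (auto simp: C4_edges_def insert_commute)
  qed
qed

lemma perfect_matching_cut_C4_cases:
  assumes "perfect_matching_cut V E M" "induced_C4 V E a b c d"
  shows "C4_edges a b c d \<inter> M = {} \<or> ({a,b} \<in> M \<and> {c,d} \<in> M) \<or> ({b,c} \<in> M \<and> {d,a} \<in> M)"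
proof -
  have pm: "perfect_matching V E M"
    using assms(1) unfolding perfect_matching_cut_def by blast
  obtain X Y where cut: "X \<union> Y = V" "X \<inter> Y = {}" "M = {e\<in>E. e \<inter> X \<noteq> {} \<and> e \<inter> Y \<noteq> {}}"
    using assms(1) unfolding perfect_matching_cut_def cutset_def by blast
  have in_V: "a \<in> V" "b \<in> V" "c \<in> V" "d \<in> V" and edges: "{a,b} \<in> E" "{b,c} \<in> E" "{c,d} \<in> E" "{d,a} \<in> E"
    using assms(2) unfolding induced_C4_def by auto
  note crossing = cut_edge_iff[OF cut edges(1) in_V(1,2)] cut_edge_iff[OF cut edges(2) in_V(2,3)]
    cut_edge_iff[OF cut edges(3) in_V(3,4)] cut_edge_iff[OF cut edges(4) in_V(4,1)]
  have "distinct [a,b,c,d]"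
    using assms(2) by (rule induced_C4_distinct)
  then have consecutive: "\<not> ({a,b} \<in> M \<and> {b,c} \<in> M)" "\<not> ({b,c} \<in> M \<and> {c,d} \<in> M)"
      "\<not> ({c,d} \<in> M \<and> {d,a} \<in> M)" "\<not> ({d,a} \<in> M \<and> {a,b} \<in> M)"
    using perfect_matching_adjacent_edges[OF pm] in_V by (metis distinct_length_2_or_more)+
  have "C4_edges a b c d \<inter> M = {} \<longleftrightarrow> {a,b} \<notin> M \<and> {b,c} \<notin> M \<and> {c,d} \<notin> M \<and> {d,a} \<notin> M"
    unfolding C4_edges_def by blast
  with consecutive show ?thesis
    unfolding crossing by blast
qed

lemma C4_unmatched_outgoing_matched:
  assumes "cubic V E" "perfect_matching V E M" "induced_C4 V E a b c d"
    and "C4_edges a b c d \<inter> M = {}"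
  shows "outgoing E {a,b,c,d} \<subseteq> M"
proof
  fix e
  assume "e \<in> outgoing E {a,b,c,d}"
  then obtain v where "e \<in> E" and v: "e \<inter> {a,b,c,d} = {v}"
    unfolding outgoing_def by (auto simp: card_1_singleton_iff)
  then have "v \<in> {a,b,c,d}" "v \<in> e"
    by auto
  obtain n1 n2 where n: "n1 \<noteq> n2" "n1 \<noteq> v" "n2 \<noteq> v" "n1 \<in> {a,b,c,d}" "n2 \<in> {a,b,c,d}"
      and cycle_edges: "{v,n1} \<in> C4_edges a b c d" "{v,n2} \<in> C4_edges a b c d"
    using C4_two_neighbours[OF assms(3) \<open>v \<in> {a,b,c,d}\<close>] .
  have "{v,n1} \<in> E" "{v,n2} \<in> E"
    using cycle_edges C4_edges_subset[OF assms(3)] by blast+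
  moreover have "{v,n1} \<notin> M" "{v,n2} \<notin> M"
    using cycle_edges assms(4) by auto
  moreover have "n1 \<notin> e" "n2 \<notin> e"
    using v n(2-5) by blast+
  moreover have "v \<in> V"
    using induced_C4_vertices[OF assms(3)] \<open>v \<in> {a,b,c,d}\<close> by blast
  ultimately show "e \<in> M"
    using cubic_matched_third_edge[OF assms(1,2) _ n(1) _ _ _ _ \<open>e \<in> E\<close> \<open>v \<in> e\<close>] by blast
qed

lemma C4_opposite_matched:
  assumes "perfect_matching V E M" "induced_C4 V E a b c d" "{a,b} \<in> M" "{c,d} \<in> M"
  shows "card (C4_edges a b c d \<inter> M) = 2"
    and "\<forall>e\<in>C4_edges a b c d \<inter> M. \<forall>f\<in>C4_edges a b c d \<inter> M. e \<noteq> f \<longrightarrow> e \<inter> f = {}"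
    and "outgoing E {a,b,c,d} \<inter> M = {}"
proof -
  have distinct: "distinct [a,b,c,d]"
    using assms(2) by (rule induced_C4_distinct)
  have in_V: "{a,b,c,d} \<subseteq> V"
    using assms(2) by (rule induced_C4_vertices)
  have "a \<in> V" "b \<in> V" "a \<noteq> c" "d \<noteq> b"
    using in_V distinct by auto
  then have "{b,c} \<notin> M" "{d,a} \<notin> M"
    using perfect_matching_adjacent_edges[OF assms(1)] assms(3) by blast+
  then have cycle_matched: "C4_edges a b c d \<inter> M = {{a,b},{c,d}}"
    using assms(3,4) unfolding C4_edges_def by blast
  with distinct show "card (C4_edges a b c d \<inter> M) = 2"
    by (simp add: doubleton_eq_iff)
  from cycle_matched distinct
  show "\<forall>e\<in>C4_edges a b c d \<inter> M. \<forall>f\<in>C4_edges a b c d \<inter> M. e \<noteq> f \<longrightarrow> e \<inter> f = {}"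
    by auto
  show "outgoing E {a,b,c,d} \<inter> M = {}"
  proof (rule equals0I)
    fix e
    assume "e \<in> outgoing E {a,b,c,d} \<inter> M"
    then obtain v where v: "e \<inter> {a,b,c,d} = {v}" and "e \<in> M"
      unfolding outgoing_def by (auto simp: card_1_singleton_iff)
    then have "v \<in> e" "v \<in> {a,b,c,d}"
      by auto
    then have "e = {a,b} \<or> e = {c,d}"
      using perfect_matching_edge_unique[OF assms(1) _ \<open>e \<in> M\<close>] assms(3,4) in_V by blast
    then have "e \<subseteq> {a,b,c,d}" "card e = 2"
      using distinct by auto
    moreover from this(1) v have "e = {v}"
      by (simp add: Int_absorb2)
    ultimately show False
      by simp
  qed
qed

theorem lemma3:
  fixes V :: "'a set" and E M :: "'a set set" and a b c d :: 'a
  assumes "cubic V E"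
    and "perfect_matching_cut V E M"
    and "induced_C4 V E a b c d"
  shows "let EC = C4_edges a b c d; Out = outgoing E {a,b,c,d};
             A = (EC \<inter> M = {} \<and> Out \<subseteq> M);
             B = (card (EC \<inter> M) = 2 \<and> (\<forall>e\<in>EC \<inter> M. \<forall>f\<in>EC \<inter> M. e \<noteq> f \<longrightarrow> e \<inter> f = {})
                  \<and> Out \<inter> M = {})
         in (A \<and> \<not> B) \<or> (B \<and> \<not> A)"
proof -
  have pm: "perfect_matching V E M"
    using assms(2) unfolding perfect_matching_cut_def by blast
  have rotated: "C4_edges b c d a = C4_edges a b c d" "{b,c,d,a} = {a,b,c,d}"
    by (auto simp: C4_edges_rotate)
  from perfect_matching_cut_C4_cases[OF assms(2,3)]
  consider (unmatched) "C4_edges a b c d \<inter> M = {}" | (ab_cd) "{a,b} \<in> M" "{c,d} \<in> M"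
    | (bc_da) "{b,c} \<in> M" "{d,a} \<in> M"
    by blast
  then show ?thesis
  proof cases
    case unmatched
    then show ?thesis
      using C4_unmatched_outgoing_matched[OF assms(1) pm assms(3)] by (simp add: Let_def)
  next
    case ab_cd
    then show ?thesis
      using C4_opposite_matched[OF pm assms(3)] unfolding Let_def by fastforce
  next
    case bc_da
    then show ?thesis
      using C4_opposite_matched[OF pm induced_C4_rotate[OF assms(3)], unfolded rotated]
      unfolding Let_def by fastforce
  qed
qed

end
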